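(* Let $N\ge3$, $\frac{N}{N-1}<p<2$, $\xi=(p-1)(N-1)$, $\beta=\frac{p-1}{\xi-1}$, $\sigma=\frac{2-p}{p-1}$. There is a constant $C>0$ such that for every $t>0$ and every function $b$ on $(0,1]$ with $\sup_{0<r\le1}r^{\sigma+2}|b(r)|\le 1$, there is a solution $a_t$ of \[ -a_t''(r)-\frac{(N-1)a_t'(r)}{r}+\frac{p\,a_t'(r)}{\beta r+tr^{\xi}}=b(r),\quad 0<r<1,\qquad a_t(1)=0, \] satisfying $\sup_{0<r\le1}\{r^{\sigma}|a_t(r)|+r^{\sigma+1}|a_t'(r)|\}\le C$. *)

theory Defs
  imports Complex_Main
begin

end

theory Submission
  imports Defs "HOL-Analysis.Analysis"
begin

text \<open>With \<open>v = a'\<close> the equation is linear of first order in \<open>v\<close>, with integrating factor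
\<open>\<mu> r = r powr (N - 1) * w r powr m\<close>, where \<open>w r = \<beta> * r powr (1 - \<xi>) + t\<close> and
\<open>m = p / (p - 1) = \<sigma> + 2\<close>; so \<open>\<mu> v\<close> is a primitive of \<open>- \<mu> b\<close> and \<open>a r = - integral {r..1} v\<close>.
Below the radius \<open>r\<^sub>c\<close> where the two terms of \<open>w\<close> agree, \<open>w\<close> is at most twice its first
term, above it at most \<open>2 t\<close>. Taking the primitive that vanishes at \<open>r\<^sub>0 = min 1 r\<^sub>c\<close> confines
each integral to one regime, where \<open>\<mu> b\<close> is bounded by a power of \<open>r\<close> and the powers of
\<open>\<beta>\<close> resp. \<open>t\<close> cancel against the matching lower bound for \<open>\<mu>\<close>. Hence
\<open>\<bar>v r\<bar> \<le> K * r powr (- \<sigma> - 1)\<close> with \<open>K\<close> independent of \<open>t\<close>, and integrating once more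
\<open>\<bar>a r\<bar> \<le> K / \<sigma> * r powr - \<sigma>\<close>.\<close>

lemma has_integral_powr:
  fixes a b e :: real
  assumes "0 < a" "a \<le> b" "e \<noteq> -1"
  shows "((\<lambda>s. s powr e) has_integral (b powr (e + 1) - a powr (e + 1)) / (e + 1)) {a..b}"
proof -
  have "((\<lambda>s. s powr e) has_integral
      (\<lambda>s. s powr (e + 1) / (e + 1)) b - (\<lambda>s. s powr (e + 1) / (e + 1)) a) {a..b}"
  proof (rule fundamental_theorem_of_calculus[OF assms(2)])
    fix x assume "x \<in> {a..b}"
    then have "((\<lambda>s. s powr (e + 1) / (e + 1)) has_real_derivative x powr e) (at x)"
      using assms by (auto intro!: derivative_eq_intros)
    then show "((\<lambda>s. s powr (e + 1) / (e + 1)) has_vector_derivative x powr e) (at x within {a..b})"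
      by (simp add: has_real_derivative_iff_has_vector_derivative[symmetric] has_field_derivative_at_within)
  qed
  then show ?thesis by (simp add: diff_divide_distrib)
qed

lemma integral_bound_by_powr:
  fixes f :: "real \<Rightarrow> real"
  assumes "0 < c" "c \<le> d" "e \<noteq> -1" "f integrable_on {c..d}"
    and f_le: "\<And>s. s \<in> {c..d} \<Longrightarrow> \<bar>f s\<bar> \<le> C * s powr e"
  shows "\<bar>integral {c..d} f\<bar> \<le> C * ((d powr (e + 1) - c powr (e + 1)) / (e + 1))"
proof -
  have "((\<lambda>s. C * s powr e) has_integral C * ((d powr (e + 1) - c powr (e + 1)) / (e + 1))) {c..d}"
    using has_integral_powr[OF assms(1-3)] by (rule has_integral_mult_right)
  with assms(4) f_le show ?thesis
    by (metis integral_norm_bound_integral integral_unique has_integral_integrable real_norm_def)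
qed

lemma integral_bound_by_powr_below_minus_one:
  fixes f :: "real \<Rightarrow> real"
  assumes "0 < c" "c \<le> d" "e < -1" "f integrable_on {c..d}"
    and f_le: "\<And>s. s \<in> {c..d} \<Longrightarrow> \<bar>f s\<bar> \<le> C * s powr e"
  shows "\<bar>integral {c..d} f\<bar> \<le> C * c powr (e + 1) / - (e + 1)"
proof -
  have "C * c powr e \<ge> 0" using f_le[of c] assms(2) by force
  then have "C \<ge> 0" using assms(1) by (simp add: zero_le_mult_iff)
  have "(d powr (e + 1) - c powr (e + 1)) / (e + 1) = (c powr (e + 1) - d powr (e + 1)) / - (e + 1)"
    by (metis minus_diff_eq minus_divide_divide)
  also have "\<dots> \<le> c powr (e + 1) / - (e + 1)"
    using assms(3) by (intro divide_right_mono) auto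
  finally have "(d powr (e + 1) - c powr (e + 1)) / (e + 1) \<le> c powr (e + 1) / - (e + 1)" .
  then have "C * ((d powr (e + 1) - c powr (e + 1)) / (e + 1)) \<le> C * c powr (e + 1) / - (e + 1)"
    using \<open>C \<ge> 0\<close> by (metis mult_left_mono times_divide_eq_right)
  with integral_bound_by_powr[OF assms(1,2) _ assms(4) f_le] assms(3) show ?thesis by fastforce
qed

lemma integral_bound_by_powr_above_minus_one:
  fixes f :: "real \<Rightarrow> real"
  assumes "0 < c" "c \<le> d" "-1 < e" "f integrable_on {c..d}"
    and f_le: "\<And>s. s \<in> {c..d} \<Longrightarrow> \<bar>f s\<bar> \<le> C * s powr e"
  shows "\<bar>integral {c..d} f\<bar> \<le> C * d powr (e + 1) / (e + 1)"
proof -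
  have "C * c powr e \<ge> 0" using f_le[of c] assms(2) by force
  then have "C \<ge> 0" using assms(1) by (simp add: zero_le_mult_iff)
  have "(d powr (e + 1) - c powr (e + 1)) / (e + 1) \<le> d powr (e + 1) / (e + 1)"
    using assms(3) by (simp add: divide_simps)
  then have "C * ((d powr (e + 1) - c powr (e + 1)) / (e + 1)) \<le> C * d powr (e + 1) / (e + 1)"
    using \<open>C \<ge> 0\<close> by (metis mult_left_mono times_divide_eq_right)
  with integral_bound_by_powr[OF assms(1,2) _ assms(4) f_le] assms(3) show ?thesis by fastforce
qed

lemma has_real_derivative_integral_lower_limit:
  fixes f :: "real \<Rightarrow> real"
  assumes "continuous_on {a<..b} f" "a < x" "x \<le> b"
  shows "((\<lambda>y. integral {y..b} f) has_real_derivative - f x) (at x within {a<..b})"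
proof -
  have "continuous_on {(a + x) / 2..b} f"
    using assms(1) by (rule continuous_on_subset) (use assms in auto)
  then have "((\<lambda>y. integral {y..b} f) has_real_derivative - f x) (at x within {(a + x) / 2..b})"
    by (rule integral_has_real_derivative') (use assms in auto)
  moreover have "at x within {(a + x) / 2..b} = at x within {a<..b}"
    by (rule at_within_nhd[where S = "{(a + x) / 2<..<x + 1}"]) (use assms in auto)
  ultimately show ?thesis by simp
qed

lemma continuous_on_integral_lower_limit:
  fixes f :: "real \<Rightarrow> real"
  assumes "continuous_on {a<..b} f"
  shows "continuous_on {a<..b} (\<lambda>y. integral {y..b} f)"
  by (rule DERIV_continuous_on[OF has_real_derivative_integral_lower_limit[OF assms]]) auto

lemma integrating_factor_has_derivative:
  fixes k m \<beta> \<xi> t y :: real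
  assumes y: "0 < y" and w: "0 < \<beta> * y powr (1 - \<xi>) + t"
  shows "((\<lambda>s. s powr k * (\<beta> * s powr (1 - \<xi>) + t) powr m) has_real_derivative
      y powr k * (\<beta> * y powr (1 - \<xi>) + t) powr m
        * (k / y + m * \<beta> * (1 - \<xi>) / (\<beta> * y + t * y powr \<xi>))) (at y)"
proof -
  define W where "W = \<beta> * y powr (1 - \<xi>) + t"
  define Y where "Y = y powr \<xi>"
  have "Y > 0" "W > 0" unfolding Y_def W_def using y w by auto
  have e1: "y powr (k - 1) = y powr k / y" using y by (simp add: powr_diff)
  have e2: "W powr (m - 1) = W powr m / W" using \<open>W > 0\<close> by (simp add: powr_diff)
  have e3: "y powr (1 - \<xi> - 1) = 1 / Y" unfolding Y_def using y by (simp add: powr_minus_divide)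
  have e4: "W * Y = \<beta> * y + t * Y"
    unfolding W_def Y_def using y by (simp add: powr_diff field_simps)
  have "((\<lambda>s. s powr k * (\<beta> * s powr (1 - \<xi>) + t) powr m) has_real_derivative
      k * y powr (k - 1) * W powr m + y powr k * (m * W powr (m - 1) * (\<beta> * ((1 - \<xi>) * y powr (1 - \<xi> - 1))))) (at y)"
    unfolding W_def using y w by (auto intro!: derivative_eq_intros)
  moreover have "k * y powr (k - 1) * W powr m + y powr k * (m * W powr (m - 1) * (\<beta> * ((1 - \<xi>) * y powr (1 - \<xi> - 1))))
      = y powr k * W powr m * (k / y + m * \<beta> * (1 - \<xi>) / (\<beta> * y + t * Y))"
    unfolding e1 e2 e3 e4[symmetric] using y \<open>W > 0\<close> \<open>Y > 0\<close> by (simp add: field_simps)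
  ultimately show ?thesis unfolding W_def Y_def by simp
qed

lemma integrating_factor_solves_linear_ode:
  fixes \<mu> J :: "real \<Rightarrow> real"
  assumes "(\<mu> has_real_derivative \<mu> y * q) (at y)" "\<mu> y \<noteq> 0"
    and "(J has_real_derivative - (\<mu> y * g)) (at y)"
  shows "((\<lambda>s. (J s - c) / \<mu> s) has_real_derivative - g - q * ((J y - c) / \<mu> y)) (at y)"
proof -
  have "((\<lambda>s. (J s - c) / \<mu> s) has_real_derivative
      (- (\<mu> y * g) * \<mu> y - (J y - c) * (\<mu> y * q)) / (\<mu> y * \<mu> y)) (at y)"
    using assms by (auto intro!: derivative_eq_intros)
  moreover have "(- (\<mu> y * g) * \<mu> y - (J y - c) * (\<mu> y * q)) / (\<mu> y * \<mu> y) = - g - q * ((J y - c) / \<mu> y)"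
    using assms(2) by (simp add: field_simps)
  ultimately show ?thesis by simp
qed

locale radial_exponents =
  fixes N p :: real
  assumes N_ge_3: "3 \<le> N" and p_gt_ratio: "N / (N - 1) < p" and p_lt_2: "p < 2"
begin

definition \<xi> where "\<xi> = (p - 1) * (N - 1)"
definition \<beta> where "\<beta> = (p - 1) / (\<xi> - 1)"
definition \<sigma> where "\<sigma> = (2 - p) / (p - 1)"
definition m where "m = p / (p - 1)"
definition K where "K = 2 powr m * (1 / (\<xi> - 1) + 1 / (N - 2 - \<sigma>))"

lemma p_gt_1: "1 < p"
proof -
  have "1 < N / (N - 1)" using N_ge_3 by (simp add: field_simps)
  then show ?thesis using p_gt_ratio by simp
qed

lemma xi_gt_1: "1 < \<xi>"
proof -
  have "N < p * (N - 1)" using p_gt_ratio N_ge_3 by (simp add: field_simps)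
  then show ?thesis unfolding \<xi>_def by (simp add: algebra_simps)
qed

lemma beta_pos: "0 < \<beta>"
  unfolding \<beta>_def using p_gt_1 xi_gt_1 by simp

lemma sigma_pos: "0 < \<sigma>"
  unfolding \<sigma>_def using p_gt_1 p_lt_2 by simp

lemma sigma_lt: "\<sigma> < N - 2"
proof -
  have "1 / (p - 1) < N - 1" using xi_gt_1 p_gt_1 unfolding \<xi>_def by (simp add: field_simps)
  then show ?thesis unfolding \<sigma>_def using p_gt_1 by (simp add: field_simps)
qed

lemma m_pos: "0 < m"
  unfolding m_def using p_gt_1 by simp

lemma sigma_plus_2: "\<sigma> + 2 = m"
  unfolding \<sigma>_def m_def using p_gt_1 by (simp add: field_simps)

lemma m_beta_xi: "m * \<beta> * (1 - \<xi>) = - p"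
proof -
  have "m * \<beta> = p / (\<xi> - 1)" unfolding m_def \<beta>_def using p_gt_1 by simp
  then show ?thesis using xi_gt_1 by (simp add: field_simps)
qed

lemma mu_inner_exponent: "N - 1 + (1 - \<xi>) * m = \<sigma> + 2 - \<xi>"
proof -
  have "\<xi> * m = p * (N - 1)" unfolding \<xi>_def m_def using p_gt_1 by simp
  then show ?thesis using sigma_plus_2 unfolding \<xi>_def by (simp add: algebra_simps)
qed

lemma K_pos: "0 < K"
  unfolding K_def using xi_gt_1 sigma_lt by (auto intro!: mult_pos_pos add_pos_pos)

end

locale radial_problem = radial_exponents +
  fixes t :: real and b :: "real \<Rightarrow> real"
  assumes t_pos: "0 < t"
    and b_cont: "continuous_on {0<..1} b"
    and b_bound: "\<forall>r\<in>{0<..1}. r powr (\<sigma> + 2) * \<bar>b r\<bar> \<le> 1"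
begin

definition w where "w s = \<beta> * s powr (1 - \<xi>) + t" for s
definition \<mu> where "\<mu> s = s powr (N - 1) * w s powr m" for s
definition r\<^sub>c where "r\<^sub>c = (\<beta> / t) powr (1 / (\<xi> - 1))"
definition r\<^sub>0 where "r\<^sub>0 = min 1 r\<^sub>c"
definition J where "J y = integral {y..1} (\<lambda>s. \<mu> s * b s)" for y
definition v where "v y = (J y - J r\<^sub>0) / \<mu> y" for y
definition a where "a y = - integral {y..1} v" for y

lemma w_pos: "0 < s \<Longrightarrow> 0 < w s"
  unfolding w_def using beta_pos t_pos by (simp add: add_pos_pos)

lemma mu_pos: "0 < s \<Longrightarrow> 0 < \<mu> s"
  unfolding \<mu>_def using w_pos[of s] by simp

lemma mu_continuous: "continuous_on {0<..1} \<mu>"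
proof -
  have "\<beta> * s powr (1 - \<xi>) + t \<noteq> 0" if "0 < s" for s
    using w_pos[OF that] unfolding w_def by simp
  then show ?thesis unfolding \<mu>_def w_def by (auto intro!: continuous_intros)
qed

lemma mu_has_derivative:
  assumes "0 < y"
  shows "(\<mu> has_real_derivative \<mu> y * ((N - 1) / y - p / (\<beta> * y + t * y powr \<xi>))) (at y)"
  using integrating_factor_has_derivative[OF assms w_pos[OF assms, unfolded w_def], of "N - 1" m]
    m_beta_xi
  unfolding \<mu>_def[abs_def] w_def by simp

lemma rc_pos: "0 < r\<^sub>c"
  unfolding r\<^sub>c_def using beta_pos t_pos by simp

lemma beta_rc_powr: "\<beta> * r\<^sub>c powr (1 - \<xi>) = t"
proof -
  have "1 / (\<xi> - 1) * (1 - \<xi>) = - 1" using xi_gt_1 by (simp add: field_simps)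
  then have "r\<^sub>c powr (1 - \<xi>) = (\<beta> / t) powr - 1"
    unfolding r\<^sub>c_def powr_powr by simp
  then show ?thesis using beta_pos t_pos by (simp add: powr_minus)
qed

lemma w_le_inner:
  assumes "0 < s" "s \<le> r\<^sub>c"
  shows "w s \<le> 2 * \<beta> * s powr (1 - \<xi>)"
proof -
  have "r\<^sub>c powr (1 - \<xi>) \<le> s powr (1 - \<xi>)"
    using assms xi_gt_1 by (intro powr_mono2') auto
  then have "t \<le> \<beta> * s powr (1 - \<xi>)"
    using beta_rc_powr beta_pos by (metis mult_left_mono less_imp_le)
  then show ?thesis unfolding w_def by simp
qed

lemma w_le_outer:
  assumes "r\<^sub>c \<le> s"
  shows "w s \<le> 2 * t"
proof -
  have "s powr (1 - \<xi>) \<le> r\<^sub>c powr (1 - \<xi>)"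
    using assms rc_pos xi_gt_1 by (intro powr_mono2') auto
  then have "\<beta> * s powr (1 - \<xi>) \<le> t"
    using beta_rc_powr beta_pos by (metis mult_left_mono less_imp_le)
  then show ?thesis unfolding w_def by simp
qed

lemma b_le_powr:
  assumes "0 < s" "s \<le> 1"
  shows "\<bar>b s\<bar> \<le> s powr (- \<sigma> - 2)"
proof -
  have "s powr (\<sigma> + 2) * \<bar>b s\<bar> \<le> 1" using b_bound assms by auto
  then have "\<bar>b s\<bar> \<le> 1 / s powr (\<sigma> + 2)" using assms by (simp add: field_simps)
  then show ?thesis using powr_minus_divide[of s "\<sigma> + 2"] by simp
qed

lemma mu_b_le_inner:
  assumes "0 < s" "s \<le> 1" "s \<le> r\<^sub>c"
  shows "\<bar>\<mu> s * b s\<bar> \<le> (2 * \<beta>) powr m * s powr - \<xi>"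
proof -
  have "w s powr m \<le> (2 * \<beta> * s powr (1 - \<xi>)) powr m"
    using w_le_inner[OF assms(1,3)] w_pos[OF assms(1)] m_pos by (intro powr_mono2) auto
  also have "\<dots> = (2 * \<beta>) powr m * s powr ((1 - \<xi>) * m)"
    using beta_pos assms(1) by (simp add: powr_mult powr_powr)
  finally have w_le: "w s powr m \<le> (2 * \<beta>) powr m * s powr ((1 - \<xi>) * m)" .
  have exponent: "N - 1 + (1 - \<xi>) * m + (- \<sigma> - 2) = - \<xi>"
    using mu_inner_exponent by linarith
  have "\<bar>\<mu> s * b s\<bar> = s powr (N - 1) * w s powr m * \<bar>b s\<bar>"
    unfolding \<mu>_def by (simp add: abs_mult)
  also have "\<dots> \<le> s powr (N - 1) * ((2 * \<beta>) powr m * s powr ((1 - \<xi>) * m)) * s powr (- \<sigma> - 2)"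
    using w_le b_le_powr[OF assms(1,2)] by (intro mult_mono mult_left_mono) auto
  also have "\<dots> = (2 * \<beta>) powr m * (s powr (N - 1) * s powr ((1 - \<xi>) * m) * s powr (- \<sigma> - 2))"
    by (simp only: ac_simps)
  also have "\<dots> = (2 * \<beta>) powr m * s powr (N - 1 + (1 - \<xi>) * m + (- \<sigma> - 2))"
    by (simp only: powr_add)
  also have "\<dots> = (2 * \<beta>) powr m * s powr - \<xi>"
    unfolding exponent ..
  finally show ?thesis .
qed

lemma mu_b_le_outer:
  assumes "r\<^sub>c \<le> s" "s \<le> 1"
  shows "\<bar>\<mu> s * b s\<bar> \<le> (2 * t) powr m * s powr (N - 3 - \<sigma>)"
proof -
  have "0 < s" using assms rc_pos by linarith
  have w_le: "w s powr m \<le> (2 * t) powr m"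
    using w_le_outer[OF assms(1)] w_pos[OF \<open>0 < s\<close>] m_pos by (intro powr_mono2) auto
  have "\<bar>\<mu> s * b s\<bar> = s powr (N - 1) * w s powr m * \<bar>b s\<bar>"
    unfolding \<mu>_def by (simp add: abs_mult)
  also have "\<dots> \<le> s powr (N - 1) * (2 * t) powr m * s powr (- \<sigma> - 2)"
    using w_le b_le_powr[OF \<open>0 < s\<close> assms(2)] by (intro mult_mono mult_left_mono) auto
  also have "\<dots> = (2 * t) powr m * (s powr (N - 1) * s powr (- \<sigma> - 2))"
    by (simp only: ac_simps)
  also have "\<dots> = (2 * t) powr m * s powr (N - 1 + (- \<sigma> - 2))"
    by (simp only: powr_add)
  also have "\<dots> = (2 * t) powr m * s powr (N - 3 - \<sigma>)"
    by (simp add: algebra_simps)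
  finally show ?thesis .
qed

lemma mu_ge_inner:
  assumes "0 < y"
  shows "\<beta> powr m * y powr (\<sigma> + 2 - \<xi>) \<le> \<mu> y"
proof -
  have "(\<beta> * y powr (1 - \<xi>)) powr m \<le> w y powr m"
    unfolding w_def using assms beta_pos t_pos m_pos by (intro powr_mono2) auto
  then show ?thesis
    unfolding \<mu>_def mu_inner_exponent[symmetric] using assms beta_pos
    by (simp add: powr_mult powr_powr powr_add mult.commute mult.left_commute)
qed

lemma mu_ge_outer:
  assumes "0 < y"
  shows "t powr m * y powr (N - 1) \<le> \<mu> y"
proof -
  have "t powr m \<le> w y powr m"
    unfolding w_def using assms beta_pos t_pos m_pos by (intro powr_mono2) auto
  then show ?thesis unfolding \<mu>_def using assms by (simp add: mult.commute)
qed

lemma mu_b_continuous: "continuous_on {0<..1} (\<lambda>s. \<mu> s * b s)"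
  by (intro continuous_intros mu_continuous b_cont)

lemma mu_b_integrable: "0 < c \<Longrightarrow> d \<le> 1 \<Longrightarrow> (\<lambda>s. \<mu> s * b s) integrable_on {c..d}"
  by (rule integrable_continuous_interval, rule continuous_on_subset[OF mu_b_continuous]) auto

lemma J_diff:
  assumes "0 < c" "c \<le> d" "d \<le> 1"
  shows "J c - J d = integral {c..d} (\<lambda>s. \<mu> s * b s)"
proof -
  have "integral {c..d} (\<lambda>s. \<mu> s * b s) + J d = J c"
    unfolding J_def using assms
    by (intro Henstock_Kurzweil_Integration.integral_combine mu_b_integrable) auto
  then show ?thesis by linarith
qed

lemma r0_pos: "0 < r\<^sub>0"
  unfolding r\<^sub>0_def using rc_pos by simp

lemma v_bound_inner:
  assumes "0 < y" "y \<le> r\<^sub>0"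
  shows "\<bar>v y\<bar> \<le> 2 powr m / (\<xi> - 1) * y powr (- \<sigma> - 1)"
proof -
  have "r\<^sub>0 \<le> 1" "r\<^sub>0 \<le> r\<^sub>c" unfolding r\<^sub>0_def by auto
  have "\<bar>J y - J r\<^sub>0\<bar> = \<bar>integral {y..r\<^sub>0} (\<lambda>s. \<mu> s * b s)\<bar>"
    using J_diff assms \<open>r\<^sub>0 \<le> 1\<close> by simp
  also have "\<dots> \<le> (2 * \<beta>) powr m * y powr (- \<xi> + 1) / - (- \<xi> + 1)"
    using assms \<open>r\<^sub>0 \<le> 1\<close> \<open>r\<^sub>0 \<le> r\<^sub>c\<close> xi_gt_1
    by (intro integral_bound_by_powr_below_minus_one mu_b_integrable mu_b_le_inner) auto
  finally have num: "\<bar>J y - J r\<^sub>0\<bar> \<le> (2 * \<beta>) powr m * y powr (1 - \<xi>) / (\<xi> - 1)"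
    by (simp add: algebra_simps)
  have den: "0 < \<beta> powr m * y powr (\<sigma> + 2 - \<xi>)"
    using beta_pos assms by simp
  have split: "y powr (1 - \<xi>) = y powr (- \<sigma> - 1) * y powr (\<sigma> + 2 - \<xi>)"
    by (simp add: powr_add[symmetric])
  have "\<bar>v y\<bar> = \<bar>J y - J r\<^sub>0\<bar> / \<mu> y"
    unfolding v_def using mu_pos[OF assms(1)] by simp
  also have "\<dots> \<le> (2 * \<beta>) powr m * y powr (1 - \<xi>) / (\<xi> - 1) / (\<beta> powr m * y powr (\<sigma> + 2 - \<xi>))"
    using num den mu_ge_inner[OF assms(1)] by (intro frac_le) auto
  also have "\<dots> = 2 powr m / (\<xi> - 1) * y powr (- \<sigma> - 1)"
    unfolding split using beta_pos assms xi_gt_1 by (simp add: powr_mult field_simps)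
  finally show ?thesis .
qed

lemma v_bound_outer:
  assumes "r\<^sub>0 < y" "y \<le> 1"
  shows "\<bar>v y\<bar> \<le> 2 powr m / (N - 2 - \<sigma>) * y powr (- \<sigma> - 1)"
proof -
  have "r\<^sub>0 = r\<^sub>c" using assms unfolding r\<^sub>0_def by auto
  have "0 < y" using assms r0_pos by linarith
  have "\<bar>J y - J r\<^sub>0\<bar> = \<bar>integral {r\<^sub>0..y} (\<lambda>s. \<mu> s * b s)\<bar>"
    using J_diff[of r\<^sub>0 y] assms r0_pos by simp
  also have "\<dots> \<le> (2 * t) powr m * y powr (N - 3 - \<sigma> + 1) / (N - 3 - \<sigma> + 1)"
    using assms r0_pos sigma_lt \<open>r\<^sub>0 = r\<^sub>c\<close>
    by (intro integral_bound_by_powr_above_minus_one mu_b_integrable mu_b_le_outer) auto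
  finally have num: "\<bar>J y - J r\<^sub>0\<bar> \<le> (2 * t) powr m * y powr (N - 2 - \<sigma>) / (N - 2 - \<sigma>)"
    by (simp add: algebra_simps)
  have den: "0 < t powr m * y powr (N - 1)"
    using t_pos \<open>0 < y\<close> by simp
  have split: "y powr (N - 2 - \<sigma>) = y powr (- \<sigma> - 1) * y powr (N - 1)"
    by (simp add: powr_add[symmetric] algebra_simps)
  have "\<bar>v y\<bar> = \<bar>J y - J r\<^sub>0\<bar> / \<mu> y"
    unfolding v_def using mu_pos[OF \<open>0 < y\<close>] by simp
  also have "\<dots> \<le> (2 * t) powr m * y powr (N - 2 - \<sigma>) / (N - 2 - \<sigma>) / (t powr m * y powr (N - 1))"
    using num den mu_ge_outer[OF \<open>0 < y\<close>] sigma_lt by (intro frac_le) auto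
  also have "\<dots> = 2 powr m / (N - 2 - \<sigma>) * y powr (- \<sigma> - 1)"
    unfolding split using t_pos \<open>0 < y\<close> by (simp add: powr_mult)
  finally show ?thesis .
qed

lemma v_bound:
  assumes "0 < y" "y \<le> 1"
  shows "\<bar>v y\<bar> \<le> K * y powr (- \<sigma> - 1)"
proof -
  have "K = 2 powr m / (\<xi> - 1) + 2 powr m / (N - 2 - \<sigma>)"
    unfolding K_def by (simp add: distrib_left)
  moreover have "0 < 2 powr m / (\<xi> - 1)" "0 < 2 powr m / (N - 2 - \<sigma>)"
    using xi_gt_1 sigma_lt by simp_all
  ultimately have "2 powr m / (\<xi> - 1) \<le> K" "2 powr m / (N - 2 - \<sigma>) \<le> K"
    by linarith+
  then show ?thesis
    using v_bound_inner[OF assms(1)] v_bound_outer[OF _ assms(2)]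
    by (metis linorder_not_le mult_right_mono powr_ge_zero order_trans)
qed

lemma v_continuous: "continuous_on {0<..1} v"
proof -
  have "continuous_on {0<..1} J"
    unfolding J_def by (rule continuous_on_integral_lower_limit[OF mu_b_continuous])
  moreover have "\<forall>y\<in>{0<..1}. \<mu> y \<noteq> 0"
    using mu_pos by force
  ultimately show ?thesis
    unfolding v_def using mu_continuous by (intro continuous_intros) auto
qed

lemma v_has_derivative:
  assumes "0 < y" "y < 1"
  shows "(v has_real_derivative - b y - ((N - 1) / y - p / (\<beta> * y + t * y powr \<xi>)) * v y) (at y)"
proof -
  have "at y within {0<..1} = at y"
    using assms by (intro at_within_open_subset[of _ "{0<..<1}"]) auto
  then have "(J has_real_derivative - (\<mu> y * b y)) (at y)"
    using has_real_derivative_integral_lower_limit[OF mu_b_continuous, of y] assms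
    unfolding J_def[abs_def] by simp
  from integrating_factor_solves_linear_ode[OF mu_has_derivative[OF assms(1)] _ this]
  show ?thesis
    unfolding v_def[abs_def] using mu_pos[OF assms(1)] by simp
qed

lemma a_has_derivative:
  assumes "0 < y" "y \<le> 1"
  shows "(a has_real_derivative v y) (at y within {0<..1})"
  using DERIV_minus[OF has_real_derivative_integral_lower_limit[OF v_continuous]] assms
  unfolding a_def[abs_def] by simp

lemma a_bound:
  assumes "0 < y" "y \<le> 1"
  shows "\<bar>a y\<bar> \<le> K / \<sigma> * y powr - \<sigma>"
proof -
  have "v integrable_on {y..1}"
    by (rule integrable_continuous_interval, rule continuous_on_subset[OF v_continuous])
      (use assms in auto)
  then have "\<bar>integral {y..1} v\<bar> \<le> K * y powr (- \<sigma> - 1 + 1) / - (- \<sigma> - 1 + 1)"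
    using assms sigma_pos v_bound by (intro integral_bound_by_powr_below_minus_one) auto
  then show ?thesis unfolding a_def by simp
qed

lemma weighted_bound:
  assumes "0 < r" "r \<le> 1"
  shows "r powr \<sigma> * \<bar>a r\<bar> + r powr (\<sigma> + 1) * \<bar>v r\<bar> \<le> K / \<sigma> + K"
proof -
  have "r powr \<sigma> * \<bar>a r\<bar> \<le> r powr \<sigma> * (K / \<sigma> * r powr - \<sigma>)"
    using a_bound[OF assms] by (intro mult_left_mono) auto
  also have "\<dots> = K / \<sigma>"
    using assms by (simp add: powr_minus field_simps)
  finally have "r powr \<sigma> * \<bar>a r\<bar> \<le> K / \<sigma>" .
  moreover have "r powr (\<sigma> + 1) * \<bar>v r\<bar> \<le> r powr (\<sigma> + 1) * (K * r powr (- \<sigma> - 1))"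
    using v_bound[OF assms] by (intro mult_left_mono) auto
  moreover have "r powr (\<sigma> + 1) * (K * r powr (- \<sigma> - 1)) = K"
    using assms by (simp add: powr_add[symmetric])
  ultimately show ?thesis by linarith
qed

lemma solution_exists:
  "\<exists>a a' a'' :: real \<Rightarrow> real.
     (\<forall>r\<in>{0<..1}. (a has_real_derivative a' r) (at r within {0<..1})) \<and>
     (\<forall>r\<in>{0<..<1}. (a' has_real_derivative a'' r) (at r)) \<and>
     (\<forall>r\<in>{0<..<1}. - a'' r - (N - 1) * a' r / r + p * a' r / (\<beta> * r + t * r powr \<xi>) = b r) \<and>
     a 1 = 0 \<and>
     (\<forall>r\<in>{0<..1}. r powr \<sigma> * \<bar>a r\<bar> + r powr (\<sigma> + 1) * \<bar>a' r\<bar> \<le> K / \<sigma> + K)"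
proof -
  define a'' where "a'' r = - b r - ((N - 1) / r - p / (\<beta> * r + t * r powr \<xi>)) * v r" for r
  show ?thesis
  proof (rule exI[of _ a], rule exI[of _ v], rule exI[of _ a''], intro conjI)
    show "\<forall>r\<in>{0<..<1}. (v has_real_derivative a'' r) (at r)"
      unfolding a''_def by (auto intro: v_has_derivative)
    show "\<forall>r\<in>{0<..<1}. - a'' r - (N - 1) * v r / r + p * v r / (\<beta> * r + t * r powr \<xi>) = b r"
      unfolding a''_def by (simp add: algebra_simps)
    show "a 1 = 0" unfolding a_def by simp
  qed (auto intro: a_has_derivative weighted_bound)
qed

end

theorem lemma2p7:
  fixes N :: nat and p :: real
  assumes "N \<ge> 3"
    and "real N / (real N - 1) < p" and "p < 2"
  shows "\<exists>C>0. \<forall>t>0. \<forall>b :: real \<Rightarrow> real.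
     continuous_on {0<..1} b \<longrightarrow>
     (\<forall>r\<in>{0<..1}. r powr ((2 - p) / (p - 1) + 2) * \<bar>b r\<bar> \<le> 1) \<longrightarrow>
     (\<exists>a a' a'' :: real \<Rightarrow> real.
        (\<forall>r\<in>{0<..1}. (a has_real_derivative a' r) (at r within {0<..1})) \<and>
        (\<forall>r\<in>{0<..<1}. (a' has_real_derivative a'' r) (at r)) \<and>
        (\<forall>r\<in>{0<..<1}.
           - a'' r - (real N - 1) * a' r / r
           + p * a' r / ((p - 1) / ((p - 1) * (real N - 1) - 1) * r
                         + t * r powr ((p - 1) * (real N - 1))) = b r) \<and>
        a 1 = 0 \<and>
        (\<forall>r\<in>{0<..1}. r powr ((2 - p) / (p - 1)) * \<bar>a r\<bar>
                        + r powr ((2 - p) / (p - 1) + 1) * \<bar>a' r\<bar> \<le> C))"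
proof -
  interpret radial_exponents "real N" p
    using assms by unfold_locales auto
  have problem: "radial_problem (real N) p t b"
    if "0 < t" "continuous_on {0<..1} b" "\<forall>r\<in>{0<..1}. r powr (\<sigma> + 2) * \<bar>b r\<bar> \<le> 1" for t b
    using radial_exponents_axioms that by (simp add: radial_problem_def radial_problem_axioms_def)
  show ?thesis
  proof (rule exI[of _ "K / \<sigma> + K"], intro conjI allI impI)
    show "0 < K / \<sigma> + K" by (intro add_pos_pos divide_pos_pos K_pos sigma_pos)
  qed (use radial_problem.solution_exists[OF problem] in \<open>simp only: \<beta>_def \<xi>_def \<sigma>_def\<close>)
qed

end
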